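(* A ternary matrix $M$ is a (strong) lonesum matrix if and only if each of its $2\times 2$ submatrices is equivalent to a matrix of one of the forms $$\begin{pmatrix}2&2\\c&d\end{pmatrix},\quad \begin{pmatrix}2&b\\2&d\end{pmatrix},\quad \begin{pmatrix}2&b\\c&0\end{pmatrix},\quad \begin{pmatrix}a&b\\0&0\end{pmatrix},\quad \begin{pmatrix}a&0\\c&0\end{pmatrix},$$ where $a,b,c,d\in\{0,1,2\}$.
   Context: A ternary matrix is a matrix with all entries in $\{0,1,2\}$. A ternary $m\times n$ matrix $M$ is a (strong) lonesum matrix if no other ternary $m\times n$ matrix has the same row sums and the same column sums as $M$. A $2\times 2$ submatrix is the matrix formed by the entries in the intersection of two chosen rows and two chosen columns. Two matrices are equivalent if one can be obtained from the other by permuting rows and permuting columns. *)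

theory Defs
  imports Main "HOL-Combinatorics.Permutations"
begin

text \<open>An m x n matrix is represented as a function nat => nat => nat; only the
entries with row index < m and column index < n are relevant.\<close>

definition ternary :: "nat \<Rightarrow> nat \<Rightarrow> (nat \<Rightarrow> nat \<Rightarrow> nat) \<Rightarrow> bool" where
  "ternary m n M \<longleftrightarrow> (\<forall>i<m. \<forall>j<n. M i j \<in> {0, 1, 2})"

definition row_sum :: "nat \<Rightarrow> (nat \<Rightarrow> nat \<Rightarrow> nat) \<Rightarrow> nat \<Rightarrow> nat" where
  "row_sum n M i = (\<Sum>j<n. M i j)"

definition col_sum :: "nat \<Rightarrow> (nat \<Rightarrow> nat \<Rightarrow> nat) \<Rightarrow> nat \<Rightarrow> nat" where
  "col_sum m M j = (\<Sum>i<m. M i j)"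

definition same_matrix :: "nat \<Rightarrow> nat \<Rightarrow> (nat \<Rightarrow> nat \<Rightarrow> nat) \<Rightarrow> (nat \<Rightarrow> nat \<Rightarrow> nat) \<Rightarrow> bool" where
  "same_matrix m n A B \<longleftrightarrow> (\<forall>i<m. \<forall>j<n. A i j = B i j)"

definition lonesum :: "nat \<Rightarrow> nat \<Rightarrow> (nat \<Rightarrow> nat \<Rightarrow> nat) \<Rightarrow> bool" where
  "lonesum m n M \<longleftrightarrow> ternary m n M \<and>
     (\<forall>M'. ternary m n M' \<and> (\<forall>i<m. row_sum n M' i = row_sum n M i)
            \<and> (\<forall>j<n. col_sum m M' j = col_sum m M j) \<longrightarrow> same_matrix m n M' M)"

definition mat_equiv :: "nat \<Rightarrow> nat \<Rightarrow> (nat \<Rightarrow> nat \<Rightarrow> nat) \<Rightarrow> (nat \<Rightarrow> nat \<Rightarrow> nat) \<Rightarrow> bool" where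
  "mat_equiv m n A B \<longleftrightarrow> (\<exists>\<sigma> \<tau>. \<sigma> permutes {..<m} \<and> \<tau> permutes {..<n} \<and>
       (\<forall>i<m. \<forall>j<n. B i j = A (\<sigma> i) (\<tau> j)))"

definition submat2 :: "(nat \<Rightarrow> nat \<Rightarrow> nat) \<Rightarrow> nat \<Rightarrow> nat \<Rightarrow> nat \<Rightarrow> nat \<Rightarrow> (nat \<Rightarrow> nat \<Rightarrow> nat)" where
  "submat2 M i1 i2 j1 j2 = (\<lambda>r c. M (if r = 0 then i1 else i2) (if c = 0 then j1 else j2))"

definition mat2 :: "nat \<Rightarrow> nat \<Rightarrow> nat \<Rightarrow> nat \<Rightarrow> (nat \<Rightarrow> nat \<Rightarrow> nat)" where
  "mat2 a b c d = (\<lambda>r s. if r = 0 then (if s = 0 then a else b) else (if s = 0 then c else d))"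

definition allowed_form :: "(nat \<Rightarrow> nat \<Rightarrow> nat) \<Rightarrow> bool" where
  "allowed_form B \<longleftrightarrow> (\<exists>a b c d. a \<in> {0,1,2} \<and> b \<in> {0,1,2} \<and> c \<in> {0,1,2} \<and> d \<in> {0,1,2} \<and>
     (same_matrix 2 2 B (mat2 2 2 c d) \<or> same_matrix 2 2 B (mat2 2 b 2 d) \<or>
      same_matrix 2 2 B (mat2 2 b c 0) \<or> same_matrix 2 2 B (mat2 a b 0 0) \<or>
      same_matrix 2 2 B (mat2 a 0 c 0)))"

end

theory Submission
  imports Defs
begin

text \<open>
  Call a pair of rows r, r' and columns c, c' a \<^emph>\<open>switch\<close> of M if
  the entries at (r,c), (r',c') are at most 1 and those at (r,c'), (r',c) are at
  least 1.  Adding 1 to the first two entries and subtracting 1 from the other two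
  gives another ternary matrix with the same line sums, so a lonesum matrix has no
  switch.  Conversely, let M be switch-free and K a different ternary matrix with
  the same line sums.  Among the rows in which K exceeds M somewhere, take a row r
  of maximal M-row sum.  A column/row sum balancing argument produces a second such
  row r'; switch-freeness forces row r' of M to dominate row r, hence by maximality
  to coincide with it, and repeating the argument at r' exhibits a switch, a
  contradiction.  So lonesum is equivalent to switch-freeness, and switch-freeness
  is a condition on 2x2 submatrices; a finite case analysis over the four
  row/column permutations of a 2x2 ternary matrix shows that "no switch" is exactly
  equivalence to one of the five allowed forms.
\<close>

text \<open>Rows r, r' and columns c, c' form a switch of M if M can be changed by +1 at
  (r,c), (r',c') and -1 at (r,c'), (r',c) while staying ternary.\<close>
definition switch :: "(nat \<Rightarrow> nat \<Rightarrow> nat) \<Rightarrow> nat \<Rightarrow> nat \<Rightarrow> nat \<Rightarrow> nat \<Rightarrow> bool" where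
  "switch M r r' c c' \<longleftrightarrow> M r c \<le> 1 \<and> M r' c' \<le> 1 \<and> 1 \<le> M r c' \<and> 1 \<le> M r' c"

definition switch_free :: "nat \<Rightarrow> nat \<Rightarrow> (nat \<Rightarrow> nat \<Rightarrow> nat) \<Rightarrow> bool" where
  "switch_free m n M \<longleftrightarrow> (\<forall>r r' c c'. r < m \<longrightarrow> r' < m \<longrightarrow> c < n \<longrightarrow> c' < n \<longrightarrow>
     r \<noteq> r' \<longrightarrow> c \<noteq> c' \<longrightarrow> \<not> switch M r r' c c')"

lemma ternary_entry:
  assumes "ternary m n M" "i < m" "j < n"
  shows "M i j \<le> 2"
  using assms unfolding ternary_def by fastforce

section \<open>Lonesum matrices are switch-free\<close>

lemma sum_eq_exceeds_elsewhere:
  fixes f g :: "'a \<Rightarrow> nat"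
  assumes "finite A" "sum f A = sum g A" "x \<in> A" "f x < g x"
  shows "\<exists>y\<in>A. g y < f y"
proof (rule ccontr)
  assume "\<not> ?thesis"
  then have "sum f A < sum g A"
    using assms by (intro sum_strict_mono_ex1) (auto simp: not_less)
  with assms(2) show False by simp
qed

lemma rank_one_perturbation_sums:
  fixes f g :: "nat \<Rightarrow> int"
  assumes f0: "sum f {..<m} = 0" and g0: "sum g {..<n} = 0"
    and K: "\<And>i j. int (K i j) = int (M i j) + f i * g j"
  shows "row_sum n K i = row_sum n M i" and "col_sum m K j = col_sum m M j"
proof -
  have "int (row_sum n K i) = (\<Sum>j<n. int (M i j) + f i * g j)"
    unfolding row_sum_def of_nat_sum K ..
  also have "\<dots> = int (row_sum n M i)"
    by (simp add: sum.distrib row_sum_def sum_distrib_left[symmetric] g0)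
  finally show "row_sum n K i = row_sum n M i" by simp
  have "int (col_sum m K j) = (\<Sum>i<m. int (M i j) + f i * g j)"
    unfolding col_sum_def of_nat_sum K ..
  also have "\<dots> = int (col_sum m M j)"
    by (simp add: sum.distrib col_sum_def sum_distrib_right[symmetric] f0)
  finally show "col_sum m K j = col_sum m M j" by simp
qed

text \<open>Performing a switch yields a different ternary matrix with the same line sums.\<close>
lemma lonesum_imp_switch_free:
  assumes L: "lonesum m n M"
  shows "switch_free m n M"
  unfolding switch_free_def
proof (intro allI impI notI)
  fix r r' c c'
  assume b: "r < m" "r' < m" "c < n" "c' < n" "r \<noteq> r'" "c \<noteq> c'"
    and sw: "switch M r r' c c'"
  have tM: "ternary m n M" using L unfolding lonesum_def by blast
  define f where "f i = (if i = r then 1 else 0) - (if i = r' then 1 else 0 :: int)" for i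
  define g where "g j = (if j = c then 1 else 0) - (if j = c' then 1 else 0 :: int)" for j
  define K where "K i j = nat (int (M i j) + f i * g j)" for i j
  have K: "int (K i j) = int (M i j) + f i * g j" for i j
    using sw b by (auto simp: K_def f_def g_def switch_def)
  have "sum f {..<m} = 0" "sum g {..<n} = 0"
    using b by (simp_all add: f_def g_def sum_subtractf)
  note sums = rank_one_perturbation_sums[OF this K]
  have "ternary m n K" unfolding ternary_def
  proof (intro allI impI)
    fix i j assume "i < m" "j < n"
    then have "M i j \<le> 2" using tM ternary_entry by blast
    then have "int (K i j) \<le> 2" unfolding K using sw b by (auto simp: f_def g_def switch_def)
    then show "K i j \<in> {0, 1, 2}" by auto
  qed
  with L sums have "same_matrix m n K M" unfolding lonesum_def by blast
  then have "K r c = M r c" using b unfolding same_matrix_def by blast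
  moreover have "int (K r c) = int (M r c) + 1" using K b by (simp add: f_def g_def)
  ultimately show False by simp
qed

section \<open>Switch-free matrices are lonesum\<close>

lemma switch_free_row_domination:
  assumes tM: "ternary m n M" and sf: "switch_free m n M"
    and rows: "r < m" "r' < m" "r \<noteq> r'" and c: "c < n" "M r c \<le> 1" "1 \<le> M r' c"
    and x: "x < n"
  shows "M r x \<le> M r' x"
proof (rule ccontr)
  assume less: "\<not> M r x \<le> M r' x"
  have "M r x \<le> 2" using tM rows(1) x by (rule ternary_entry)
  with less have "switch M r r' c x" using c unfolding switch_def by auto
  moreover have "x \<noteq> c" using less c by auto
  ultimately show False using sf rows c(1) x unfolding switch_free_def by blast
qed

lemma excess_row_step:
  assumes tM: "ternary m n M" and tK: "ternary m n K"
    and rows: "\<forall>i<m. row_sum n K i = row_sum n M i"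
    and cols: "\<forall>j<n. col_sum m K j = col_sum m M j"
    and sf: "switch_free m n M"
    and P: "P = {i. i < m \<and> (\<exists>j<n. M i j < K i j)}"
    and rP: "r \<in> P" and maximal: "\<forall>i\<in>P. row_sum n M i \<le> row_sum n M r"
    and c: "c < n" "M r c < K r c"
  shows "\<exists>r'. r' \<in> P \<and> r' \<noteq> r \<and> K r' c < M r' c \<and> (\<forall>x<n. M r' x = M r x) \<and> M r c = 1"
proof -
  have r: "r < m" using rP P by auto
  have "sum (\<lambda>i. M i c) {..<m} = sum (\<lambda>i. K i c) {..<m}"
    using cols c by (simp add: col_sum_def)
  then obtain r' where r': "r' < m" "K r' c < M r' c"
    using sum_eq_exceeds_elsewhere[of "{..<m}"] r c by blast
  have rr': "r' \<noteq> r" using r' c by auto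
  have "sum (K r') {..<n} = sum (M r') {..<n}" using rows r' by (simp add: row_sum_def)
  then obtain c' where "c' < n" "M r' c' < K r' c'"
    using sum_eq_exceeds_elsewhere[of "{..<n}"] r' c by blast
  then have r'P: "r' \<in> P" using P r' by auto
  have Mrc: "M r c \<le> 1" using ternary_entry[OF tK r c(1)] c(2) by simp
  have Mr'c: "1 \<le> M r' c" using r' by simp
  have dom: "M r x \<le> M r' x" if "x < n" for x
    using switch_free_row_domination[OF tM sf r r'(1) rr'[symmetric] c(1) Mrc Mr'c that] .
  have same_row: "\<forall>x<n. M r' x = M r x"
  proof (rule ccontr)
    assume "\<not> ?thesis"
    then obtain x where "x < n" "M r x < M r' x" using dom by (metis le_neq_implies_less)
    then have "sum (M r) {..<n} < sum (M r') {..<n}" using dom by (intro sum_strict_mono_ex1) auto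
    moreover have "row_sum n M r' \<le> row_sum n M r" using maximal r'P by auto
    ultimately show False by (simp add: row_sum_def)
  qed
  then have "M r c = 1" using c(1) Mrc Mr'c by (metis le_antisym)
  with r'P rr' r' same_row show ?thesis by blast
qed

text \<open>If K has the same line sums as the switch-free M, no row of K exceeds M anywhere
  (otherwise the extremal step, applied twice, yields a switch), and by the row sums
  K cannot fall below M either.\<close>
lemma switch_free_imp_lonesum:
  assumes tM: "ternary m n M" and sf: "switch_free m n M"
  shows "lonesum m n M"
  unfolding lonesum_def
proof (intro conjI allI impI)
  show "ternary m n M" by fact
  fix K assume "ternary m n K \<and> (\<forall>i<m. row_sum n K i = row_sum n M i)
            \<and> (\<forall>j<n. col_sum m K j = col_sum m M j)"
  then have tK: "ternary m n K" and rows: "\<forall>i<m. row_sum n K i = row_sum n M i"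
    and cols: "\<forall>j<n. col_sum m K j = col_sum m M j" by auto
  define P where "P = {i. i < m \<and> (\<exists>j<n. M i j < K i j)}"
  note step = excess_row_step[OF tM tK rows cols sf P_def]
  have P_empty: "P = {}"
  proof (rule ccontr)
    assume "P \<noteq> {}"
    moreover have "finite P" by (rule finite_subset[of _ "{..<m}"]) (auto simp: P_def)
    ultimately obtain r where rP: "r \<in> P" and "row_sum n M r = Max (row_sum n M ` P)"
      using Max_in[of "row_sum n M ` P"] by (metis finite_imageI image_iff image_is_empty)
    with \<open>finite P\<close> have maximal: "\<forall>i\<in>P. row_sum n M i \<le> row_sum n M r" by simp
    obtain c where c: "c < n" "M r c < K r c" using rP P_def by auto
    obtain r' where r': "r' \<in> P" "r' \<noteq> r" "K r' c < M r' c" "\<forall>x<n. M r' x = M r x" "M r c = 1"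
      using step[OF rP maximal c] by blast
    have "row_sum n M r' = row_sum n M r" unfolding row_sum_def using r'(4) by simp
    then have maximal': "\<forall>i\<in>P. row_sum n M i \<le> row_sum n M r'" using maximal by simp
    obtain c' where c': "c' < n" "M r' c' < K r' c'" using r'(1) P_def by auto
    have "M r' c' = 1" using step[OF r'(1) maximal' c'] by blast
    then have "switch M r r' c c'" using r'(4,5) c c' unfolding switch_def by auto
    moreover have "c \<noteq> c'" using c' r'(3) by auto
    ultimately show False using sf rP r' c c' unfolding switch_free_def P_def by blast
  qed
  show "same_matrix m n K M" unfolding same_matrix_def
  proof (intro allI impI)
    fix i j assume ij: "i < m" "j < n"
    have "\<not> M i j < K i j" using P_empty ij P_def by blast
    moreover have "\<not> K i j < M i j"
    proof
      assume "K i j < M i j"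
      moreover have "sum (K i) {..<n} = sum (M i) {..<n}" using rows ij by (simp add: row_sum_def)
      ultimately obtain y where "y < n" "M i y < K i y"
        using sum_eq_exceeds_elsewhere[of "{..<n}"] ij by blast
      then show False using P_empty ij P_def by blast
    qed
    ultimately show "K i j = M i j" by simp
  qed
qed

section \<open>Switch-freeness as a condition on 2x2 submatrices\<close>

lemma switch_free_iff_ordered:
  "switch_free m n M \<longleftrightarrow> (\<forall>i1 i2 j1 j2. i1 < i2 \<and> i2 < m \<and> j1 < j2 \<and> j2 < n \<longrightarrow>
     \<not> switch M i1 i2 j1 j2 \<and> \<not> switch M i1 i2 j2 j1)"
proof -
  have switch_swap: "switch M r r' c c' \<longleftrightarrow> switch M r' r c' c" for r r' c c'
    unfolding switch_def by auto
  show ?thesis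
  proof
    assume "switch_free m n M"
    then show "\<forall>i1 i2 j1 j2. i1 < i2 \<and> i2 < m \<and> j1 < j2 \<and> j2 < n \<longrightarrow>
        \<not> switch M i1 i2 j1 j2 \<and> \<not> switch M i1 i2 j2 j1"
      unfolding switch_free_def by (metis less_trans less_not_refl)
  next
    assume ordered: "\<forall>i1 i2 j1 j2. i1 < i2 \<and> i2 < m \<and> j1 < j2 \<and> j2 < n \<longrightarrow>
        \<not> switch M i1 i2 j1 j2 \<and> \<not> switch M i1 i2 j2 j1"
    show "switch_free m n M" unfolding switch_free_def
    proof (intro allI impI)
      fix r r' c c' assume "r < m" "r' < m" "c < n" "c' < n" "r \<noteq> r'" "c \<noteq> c'"
      then consider "r < r'" "c < c'" | "r < r'" "c' < c" | "r' < r" "c < c'" | "r' < r" "c' < c"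
        by (meson nat_neq_iff)
      then show "\<not> switch M r r' c c'"
        by cases (use ordered switch_swap \<open>r < m\<close> \<open>r' < m\<close> \<open>c < n\<close> \<open>c' < n\<close> in blast)+
    qed
  qed
qed

definition allowed_entries :: "nat \<Rightarrow> nat \<Rightarrow> nat \<Rightarrow> nat \<Rightarrow> bool" where
  "allowed_entries a b c d \<longleftrightarrow> {a, b, c, d} \<subseteq> {0, 1, 2} \<and>
     ((a = 2 \<and> b = 2) \<or> (a = 2 \<and> c = 2) \<or> (a = 2 \<and> d = 0) \<or> (c = 0 \<and> d = 0) \<or> (b = 0 \<and> d = 0))"

lemma all_less_2: "(\<forall>i<(2::nat). P i) \<longleftrightarrow> P 0 \<and> P 1"
  using less_2_cases by auto

lemma same_matrix_mat2:
  "same_matrix 2 2 B (mat2 a b c d) \<longleftrightarrow> B 0 0 = a \<and> B 0 1 = b \<and> B 1 0 = c \<and> B 1 1 = d"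
  by (simp add: same_matrix_def mat2_def all_less_2)

lemma allowed_form_iff_entries:
  "allowed_form B \<longleftrightarrow> allowed_entries (B 0 0) (B 0 1) (B 1 0) (B 1 1)"
proof
  assume "allowed_form B"
  then obtain a b c d where "{a, b, c, d} \<subseteq> {0, 1, 2}" and
    "same_matrix 2 2 B (mat2 2 2 c d) \<or> same_matrix 2 2 B (mat2 2 b 2 d) \<or>
     same_matrix 2 2 B (mat2 2 b c 0) \<or> same_matrix 2 2 B (mat2 a b 0 0) \<or>
     same_matrix 2 2 B (mat2 a 0 c 0)"
    unfolding allowed_form_def by auto
  then show "allowed_entries (B 0 0) (B 0 1) (B 1 0) (B 1 1)"
    unfolding same_matrix_mat2 allowed_entries_def
    by (elim conjE disjE) (simp_all only: insert_subset; simp)+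
next
  assume "allowed_entries (B 0 0) (B 0 1) (B 1 0) (B 1 1)"
  then show "allowed_form B"
    unfolding allowed_form_def same_matrix_mat2 allowed_entries_def
    by (intro exI[of _ "B 0 0"] exI[of _ "B 0 1"] exI[of _ "B 1 0"] exI[of _ "B 1 1"])
      (elim conjE disjE; simp only: insert_subset; simp)
qed

lemma permutes_less_2:
  assumes p: "\<sigma> permutes {..<2::nat}"
  shows "\<sigma> = id \<or> \<sigma> = transpose 0 1"
proof -
  have "\<sigma> 0 < 2" "\<sigma> 1 < 2" using permutes_in_image[OF p] by auto
  moreover have "\<sigma> 0 \<noteq> \<sigma> 1" using permutes_inj[OF p] by (metis inj_eq zero_neq_one)
  moreover have "\<sigma> i = i" if "i \<ge> 2" for i using permutes_not_in[OF p] that by auto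
  ultimately show ?thesis using less_2_cases
    by (auto simp: fun_eq_iff transpose_def) (metis One_nat_def not_less)+
qed

lemma equiv_allowed_iff:
  "(\<exists>B. mat_equiv 2 2 A B \<and> allowed_form B) \<longleftrightarrow>
   allowed_entries (A 0 0) (A 0 1) (A 1 0) (A 1 1) \<or> allowed_entries (A 1 0) (A 1 1) (A 0 0) (A 0 1) \<or>
   allowed_entries (A 0 1) (A 0 0) (A 1 1) (A 1 0) \<or> allowed_entries (A 1 1) (A 1 0) (A 0 1) (A 0 0)"
  (is "?lhs \<longleftrightarrow> ?rhs")
proof -
  have perms: "\<sigma> permutes {..<2::nat} \<longleftrightarrow> \<sigma> = id \<or> \<sigma> = transpose 0 1" for \<sigma>
    using permutes_less_2[of \<sigma>] permutes_id[of "{..<2::nat}"]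
      permutes_swap_id[of 0 "{..<2::nat}" 1] by auto
  have "?lhs \<longleftrightarrow> (\<exists>\<sigma> \<tau>. \<sigma> permutes {..<2} \<and> \<tau> permutes {..<2} \<and>
      allowed_form (\<lambda>i j. A (\<sigma> i) (\<tau> j)))" (is "_ \<longleftrightarrow> ?permuted")
  proof
    assume ?lhs
    then obtain B \<sigma> \<tau> where "\<sigma> permutes {..<2}" "\<tau> permutes {..<2}"
      "\<forall>i<2. \<forall>j<2. B i j = A (\<sigma> i) (\<tau> j)" "allowed_form B"
      unfolding mat_equiv_def by blast
    then show ?permuted unfolding allowed_form_iff_entries all_less_2 by auto
  next
    assume ?permuted
    then obtain \<sigma> \<tau> where "\<sigma> permutes {..<2}" "\<tau> permutes {..<2}"
      "allowed_form (\<lambda>i j. A (\<sigma> i) (\<tau> j))" by blast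
    then show ?lhs unfolding mat_equiv_def
      by (intro exI[of _ "\<lambda>i j. A (\<sigma> i) (\<tau> j)"]) blast
  qed
  also have "\<dots> \<longleftrightarrow> (\<exists>\<sigma> \<tau>. (\<sigma> = id \<or> \<sigma> = transpose 0 1) \<and> (\<tau> = id \<or> \<tau> = transpose 0 1) \<and>
      allowed_form (\<lambda>i j. A (\<sigma> i) (\<tau> j)))"
    unfolding perms ..
  also have "\<dots> \<longleftrightarrow> ?rhs"
  proof -
    have four_cases: "(\<exists>\<sigma> \<tau>. (\<sigma> = a \<or> \<sigma> = b) \<and> (\<tau> = a \<or> \<tau> = b) \<and> Q \<sigma> \<tau>) \<longleftrightarrow>
        Q a a \<or> Q b a \<or> Q a b \<or> Q b b" for a b :: "nat \<Rightarrow> nat" and Q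
      by blast
    show ?thesis unfolding four_cases allowed_form_iff_entries by simp
  qed
  finally show ?thesis .
qed

lemma allowed_orbit_iff_no_switch:
  assumes "{a, b, c, d} \<subseteq> {0, 1, 2::nat}"
  shows "(allowed_entries a b c d \<or> allowed_entries c d a b \<or> allowed_entries b a d c \<or>
          allowed_entries d c b a) \<longleftrightarrow>
         \<not> (a \<le> 1 \<and> d \<le> 1 \<and> 1 \<le> b \<and> 1 \<le> c) \<and> \<not> (b \<le> 1 \<and> c \<le> 1 \<and> 1 \<le> a \<and> 1 \<le> d)"
proof -
  have "a \<in> {0,1,2}" "b \<in> {0,1,2}" "c \<in> {0,1,2}" "d \<in> {0,1,2}" using assms by auto
  then show ?thesis unfolding allowed_entries_def by (elim insertE emptyE) simp_all
qed

lemma submatrix_allowed_iff_no_switch: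
  assumes "ternary m n M" "i1 < i2" "i2 < m" "j1 < j2" "j2 < n"
  shows "(\<exists>B. mat_equiv 2 2 (submat2 M i1 i2 j1 j2) B \<and> allowed_form B) \<longleftrightarrow>
         \<not> switch M i1 i2 j1 j2 \<and> \<not> switch M i1 i2 j2 j1"
proof -
  have "{M i1 j1, M i1 j2, M i2 j1, M i2 j2} \<subseteq> {0, 1, 2}"
    using assms unfolding ternary_def by (auto dest: less_trans)
  then show ?thesis
    unfolding equiv_allowed_iff using allowed_orbit_iff_no_switch
    by (simp add: submat2_def switch_def)
qed

theorem theorem3p1:
  fixes m n :: nat and M :: "nat \<Rightarrow> nat \<Rightarrow> nat"
  assumes "ternary m n M"
  shows "lonesum m n M \<longleftrightarrow>
    (\<forall>i1 i2 j1 j2. i1 < i2 \<and> i2 < m \<and> j1 < j2 \<and> j2 < n \<longrightarrow>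
       (\<exists>B. mat_equiv 2 2 (submat2 M i1 i2 j1 j2) B \<and> allowed_form B))"
proof -
  have "lonesum m n M \<longleftrightarrow> switch_free m n M"
    using assms lonesum_imp_switch_free switch_free_imp_lonesum by blast
  also have "\<dots> \<longleftrightarrow> (\<forall>i1 i2 j1 j2. i1 < i2 \<and> i2 < m \<and> j1 < j2 \<and> j2 < n \<longrightarrow>
       (\<exists>B. mat_equiv 2 2 (submat2 M i1 i2 j1 j2) B \<and> allowed_form B))"
    unfolding switch_free_iff_ordered using submatrix_allowed_iff_no_switch[OF assms] by blast
  finally show ?thesis .
qed

end
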